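(* Let $A\in s(3)$. Then $A$ is indivisible in $s(3)$ if and only if there exist $3\times3$ permutation matrices $P,Q$ such that $$P\operatorname{sgn}(A)Q=\begin{pmatrix}0&1&1\\1&0&1\\1&1&0\end{pmatrix}.$$
   Context: $s(3)$ denotes the set of $3\times 3$ real matrices with non-negative entries whose columns each sum to $1$, a monoid under matrix multiplication whose group of units is the set of permutation matrices. $\operatorname{sgn}$ is applied entrywise ($\operatorname{sgn}(x)=1$ for $x>0$, $\operatorname{sgn}(0)=0$). $A\in s(3)$ is indivisible if for every decomposition $A=BC$ with $B,C\in s(3)$ exactly one of $B,C$ is a permutation matrix. *)

theory Defs
  imports "HOL-Analysis.Analysis"
begin

text \<open>Column-stochastic 3x3 real matrices: non-negative entries, each column sums to 1.
  Entry (i,j) of a matrix M :: real^3^3 is M $ i $ j (row i, column j).\<close>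
definition s3 :: "(real^3^3) set" where
  "s3 = {M. (\<forall>i j. M $ i $ j \<ge> 0) \<and> (\<forall>j. (\<Sum>i\<in>UNIV. M $ i $ j) = 1)}"

definition perm_mat :: "real^3^3 \<Rightarrow> bool" where
  "perm_mat P \<longleftrightarrow> (\<exists>p. p permutes (UNIV :: 3 set) \<and>
      P = (\<chi> i j. if i = p j then 1 else 0))"

definition sgn_mat :: "real^3^3 \<Rightarrow> real^3^3" where
  "sgn_mat A = (\<chi> i j. sgn (A $ i $ j))"

definition indivisible :: "real^3^3 \<Rightarrow> bool" where
  "indivisible A \<longleftrightarrow> (\<forall>B\<in>s3. \<forall>C\<in>s3. A = B ** C \<longrightarrow>
      ((perm_mat B \<and> \<not> perm_mat C) \<or> (\<not> perm_mat B \<and> perm_mat C)))"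

definition J0 :: "real^3^3" where
  "J0 = (\<chi> i j. if i = j then 0 else 1)"

end

theory Submission
  imports Defs
begin

text \<open>Only the zero pattern of a stochastic matrix matters. The support of a product
  B C of non-negative matrices is the Boolean product of the supports, and a stochastic matrix
  is a permutation matrix iff its support is a permutation pattern; so if the zero pattern of
  A is a permutation pattern, indivisibility reduces to a finite check on 3 by 3 Boolean
  matrices. Conversely, an indivisible A is not a permutation matrix, and no column support
  of A contains another: if the support of column k lies in that of column j, then for small
  e > 0 we have A = B C, where C is the identity with column j replaced by (1 - e) e_j + e e_k
  and B is A with column j replaced by (A_j - e A_k) / (1 - e). B has the support of A and
  column j of C has two positive entries, so neither factor is a permutation matrix.
  Pairwise incomparable non-empty subsets of a 3-element set that do not form a permutation
  pattern are the three 2-subsets, so the zero pattern of A is a permutation pattern, which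
  is what P sgn(A) Q = J0 says.\<close>

lemma exists_3: "(\<exists>i::3. P i) \<longleftrightarrow> P 1 \<or> P 2 \<or> P 3"
  by (metis exhaust_3)

lemma distinct_3:
  "(1::3) \<noteq> 2" "(1::3) \<noteq> 3" "(2::3) \<noteq> 3" "(2::3) \<noteq> 1" "(3::3) \<noteq> 1" "(3::3) \<noteq> 2"
  by simp_all

lemma ex1_3: "(\<exists>!i::3. P i) \<longleftrightarrow>
    (P 1 \<and> \<not> P 2 \<and> \<not> P 3) \<or> (\<not> P 1 \<and> P 2 \<and> \<not> P 3) \<or> (\<not> P 1 \<and> \<not> P 2 \<and> P 3)"
  by (metis distinct_3(4-6) exhaust_3)

definition perm_pattern :: "('a \<Rightarrow> 'a \<Rightarrow> bool) \<Rightarrow> bool" where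
  "perm_pattern X \<longleftrightarrow> (\<exists>p. p permutes UNIV \<and> (\<forall>i j. X i j \<longleftrightarrow> i = p j))"

lemma perm_pattern_iff_ex1:
  "perm_pattern X \<longleftrightarrow> (\<forall>j. \<exists>!i. X i j) \<and> (\<forall>i. \<exists>!j. X i j)"
proof
  assume "perm_pattern X"
  then obtain p where p: "p permutes UNIV" "\<forall>i j. X i j \<longleftrightarrow> i = p j"
    unfolding perm_pattern_def by blast
  show "(\<forall>j. \<exists>!i. X i j) \<and> (\<forall>i. \<exists>!j. X i j)"
    using p permutes_univ by metis
next
  assume X: "(\<forall>j. \<exists>!i. X i j) \<and> (\<forall>i. \<exists>!j. X i j)"
  define p where "p j = (THE i. X i j)" for j
  have p: "X i j \<longleftrightarrow> i = p j" for i j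
    using X unfolding p_def by (metis theI')
  have "bij p"
    using X unfolding p bij_iff by metis
  then show "perm_pattern X"
    unfolding perm_pattern_def using p bij_imp_permutes by blast
qed

lemma perm_pattern_comp_compl_xor:
  fixes X Y :: "3 \<Rightarrow> 3 \<Rightarrow> bool"
  assumes "\<forall>k. \<exists>i. X i k" "\<forall>j. \<exists>k. Y k j"
    and "perm_pattern (\<lambda>i j. \<not> (\<exists>k. X i k \<and> Y k j))"
  shows "perm_pattern X \<longleftrightarrow> \<not> perm_pattern Y"
  using assms unfolding perm_pattern_iff_ex1 ex1_3 exists_3 forall_3
  by satx

lemma perm_pattern_compl_if_incomparable_columns:
  fixes X :: "3 \<Rightarrow> 3 \<Rightarrow> bool"
  assumes "\<forall>j. \<exists>i. X i j" "\<not> perm_pattern X"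
    and "\<forall>j k. j \<noteq> k \<longrightarrow> \<not> (\<forall>i. X i k \<longrightarrow> X i j)"
  shows "perm_pattern (\<lambda>i j. \<not> X i j)"
  using assms unfolding perm_pattern_iff_ex1 ex1_3 exists_3 forall_3
  by (simp only: distinct_3 simp_thms) satx

definition supp_mat :: "real^'n^'m \<Rightarrow> 'm \<Rightarrow> 'n \<Rightarrow> bool" where
  "supp_mat M i j \<longleftrightarrow> 0 < M $ i $ j"

lemma supp_mat_mult:
  fixes B :: "real^'n^'m" and C :: "real^'p^'n"
  assumes "\<And>i k. 0 \<le> B $ i $ k" "\<And>k j. 0 \<le> C $ k $ j"
  shows "supp_mat (B ** C) i j \<longleftrightarrow> (\<exists>k. supp_mat B i k \<and> supp_mat C k j)"
proof -
  have terms_nonneg: "0 \<le> B $ i $ k * C $ k $ j" for k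
    using assms by simp
  then have "(B ** C) $ i $ j \<noteq> 0 \<longleftrightarrow> (\<exists>k. B $ i $ k * C $ k $ j \<noteq> 0)"
    by (simp add: matrix_matrix_mult_def sum_nonneg_eq_0_iff)
  moreover have "0 \<le> (B ** C) $ i $ j"
    using terms_nonneg by (simp add: matrix_matrix_mult_def sum_nonneg)
  ultimately show ?thesis
    using assms unfolding supp_mat_def by (metis less_le mult_eq_0_iff)
qed

lemma s3_nonneg: "M \<in> s3 \<Longrightarrow> 0 \<le> M $ i $ j"
  by (simp add: s3_def)

lemma s3_column_sum: "M \<in> s3 \<Longrightarrow> (\<Sum>i\<in>UNIV. M $ i $ j) = 1"
  by (simp add: s3_def)

lemma s3_le_1:
  assumes "M \<in> s3"
  shows "M $ i $ j \<le> 1"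
proof -
  have "M $ i $ j \<le> (\<Sum>i\<in>UNIV. M $ i $ j)"
    by (rule member_le_sum) (auto simp: s3_nonneg[OF assms])
  then show ?thesis
    using s3_column_sum[OF assms] by simp
qed

lemma s3_column_ex_supp:
  assumes "M \<in> s3"
  shows "\<exists>i. supp_mat M i j"
proof (rule ccontr)
  assume "\<nexists>i. supp_mat M i j"
  then have "\<forall>i. M $ i $ j = 0"
    using s3_nonneg[OF assms] by (simp add: supp_mat_def order_less_le)
  then show False
    using s3_column_sum[OF assms, of j] by simp
qed

lemma s3_column_single_supp:
  assumes "M \<in> s3" and "\<forall>i. supp_mat M i j \<longleftrightarrow> i = i\<^sub>0"
  shows "M $ i $ j = of_bool (i = i\<^sub>0)"
proof -
  have zero: "M $ i $ j = 0" if "i \<noteq> i\<^sub>0" for i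
    using assms that s3_nonneg[OF assms(1), of i j] by (auto simp: supp_mat_def order_less_le)
  then have "(\<Sum>i\<in>UNIV. M $ i $ j) = M $ i\<^sub>0 $ j"
    by (subst sum.remove[of _ i\<^sub>0]) auto
  then show ?thesis
    using s3_column_sum[OF assms(1), of j] zero by auto
qed

definition perm_matrix :: "('n \<Rightarrow> 'n) \<Rightarrow> real^'n^'n" where
  "perm_matrix p = (\<chi> i j. of_bool (i = p j))"

lemma perm_mat_iff_perm_matrix: "perm_mat P \<longleftrightarrow> (\<exists>p. p permutes UNIV \<and> P = perm_matrix p)"
  by (simp add: perm_mat_def perm_matrix_def of_bool_def)

lemma supp_perm_matrix: "supp_mat (perm_matrix p) i j \<longleftrightarrow> i = p j"
  by (simp add: supp_mat_def perm_matrix_def)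

lemma perm_matrix_mult:
  assumes "p permutes UNIV"
  shows "(perm_matrix p ** M) $ i $ j = M $ inv p i $ j"
proof -
  have "(i = p k) \<longleftrightarrow> (k = inv p i)" for k
    using permutes_inv_eq[OF assms] by metis
  then show ?thesis
    by (simp add: perm_matrix_def matrix_matrix_mult_def)
qed

lemma mult_perm_matrix: "(M ** perm_matrix q) $ i $ j = M $ i $ q j"
  by (simp add: perm_matrix_def matrix_matrix_mult_def)

lemma perm_matrix_mult_mult_perm_matrix:
  assumes "p permutes UNIV"
  shows "(perm_matrix p ** M ** perm_matrix q) $ i $ j = M $ inv p i $ q j"
  by (simp add: mult_perm_matrix perm_matrix_mult[OF assms])

lemma perm_mat_iff_perm_pattern:
  assumes "M \<in> s3"
  shows "perm_mat M \<longleftrightarrow> perm_pattern (supp_mat M)"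
proof
  assume "perm_mat M"
  then show "perm_pattern (supp_mat M)"
    unfolding perm_mat_iff_perm_matrix perm_pattern_def using supp_perm_matrix by blast
next
  assume "perm_pattern (supp_mat M)"
  then obtain p where p: "p permutes UNIV" "\<forall>i j. supp_mat M i j \<longleftrightarrow> i = p j"
    unfolding perm_pattern_def by blast
  then have "M $ i $ j = of_bool (i = p j)" for i j
    using s3_column_single_supp[OF assms, of j "p j"] by simp
  then have "M = perm_matrix p"
    by (simp add: vec_eq_iff perm_matrix_def)
  then show "perm_mat M"
    unfolding perm_mat_iff_perm_matrix using p(1) by blast
qed

lemma perm_mat_in_s3:
  assumes "perm_mat P"
  shows "P \<in> s3"
proof -
  obtain p where "P = perm_matrix p"
    using assms unfolding perm_mat_iff_perm_matrix by blast
  then show ?thesis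
    by (simp add: s3_def perm_matrix_def)
qed

lemma sgn_mat_eq_supp:
  assumes "0 \<le> A $ i $ j"
  shows "sgn_mat A $ i $ j = of_bool (supp_mat A i j)"
  using assms by (simp add: sgn_mat_def supp_mat_def)

lemma sgn_mat_perm_equiv_J0_iff:
  assumes nonneg: "\<And>i j. 0 \<le> A $ i $ j"
  shows "(\<exists>P Q. perm_mat P \<and> perm_mat Q \<and> P ** sgn_mat A ** Q = J0) \<longleftrightarrow>
    perm_pattern (\<lambda>i j. \<not> supp_mat A i j)"
proof
  assume "\<exists>P Q. perm_mat P \<and> perm_mat Q \<and> P ** sgn_mat A ** Q = J0"
  then obtain p q where p: "p permutes UNIV" and q: "q permutes UNIV"
    and eq: "perm_matrix p ** sgn_mat A ** perm_matrix q = J0"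
    unfolding perm_mat_iff_perm_matrix by blast
  have sgn_eq: "sgn_mat A $ i $ j = J0 $ p i $ inv q j" for i j
    using perm_matrix_mult_mult_perm_matrix[OF p, of "sgn_mat A" q "p i" "inv q j"]
    by (simp add: eq permutes_inverses[OF p] permutes_inverses[OF q])
  have "\<not> supp_mat A i j \<longleftrightarrow> p i = inv q j" for i j
    using sgn_eq[of i j] by (cases "p i = inv q j") (simp_all add: sgn_mat_eq_supp[OF nonneg] J0_def)
  also have "p i = inv q j \<longleftrightarrow> i = (inv p \<circ> inv q) j" for i j
    using permutes_inv_eq[OF p, of "inv q j" i] by auto
  finally have "\<forall>i j. \<not> supp_mat A i j \<longleftrightarrow> i = (inv p \<circ> inv q) j"
    by blast
  moreover have "inv p \<circ> inv q permutes UNIV"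
    using p q by (simp add: permutes_compose permutes_inv)
  ultimately show "perm_pattern (\<lambda>i j. \<not> supp_mat A i j)"
    unfolding perm_pattern_def by blast
next
  assume "perm_pattern (\<lambda>i j. \<not> supp_mat A i j)"
  then obtain r where r: "r permutes UNIV" and supp: "\<And>i j. supp_mat A i j \<longleftrightarrow> i \<noteq> r j"
    unfolding perm_pattern_def by blast
  have "(perm_matrix (inv r) ** sgn_mat A ** perm_matrix id) $ i $ j = J0 $ i $ j" for i j
    using perm_matrix_mult_mult_perm_matrix[OF permutes_inv[OF r], of "sgn_mat A" id i j]
    by (simp add: permutes_inv_inv[OF r] sgn_mat_eq_supp[OF nonneg] supp J0_def
        permutes_inj[OF r] inj_eq)
  then have "perm_matrix (inv r) ** sgn_mat A ** perm_matrix id = J0"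
    by (simp add: vec_eq_iff)
  moreover have "perm_mat (perm_matrix (inv r))" "perm_mat (perm_matrix id)"
    unfolding perm_mat_iff_perm_matrix using r permutes_inv permutes_id by blast+
  ultimately show "\<exists>P Q. perm_mat P \<and> perm_mat Q \<and> P ** sgn_mat A ** Q = J0"
    by blast
qed

definition column_mix :: "'n \<Rightarrow> 'n \<Rightarrow> real \<Rightarrow> real^'n^'n" where
  "column_mix j k e =
    (\<chi> m l. if l = j then (1 - e) * of_bool (m = j) + e * of_bool (m = k) else of_bool (m = l))"

lemma mult_column_mix:
  "(B ** column_mix j k e) $ i $ l =
    (if l = j then (1 - e) * B $ i $ j + e * B $ i $ k else B $ i $ l)"
  by (simp add: column_mix_def matrix_matrix_mult_def distrib_left sum.distrib
      mult.assoc[symmetric] mult.commute[of _ "1 - e"] mult.commute[of _ e])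

lemma column_mix_in_s3:
  assumes "0 \<le> e" "e \<le> 1" "j \<noteq> k"
  shows "column_mix j k e \<in> s3"
  unfolding s3_def
proof (intro CollectI conjI allI)
  show "0 \<le> column_mix j k e $ i $ l" for i l
    using assms by (simp add: column_mix_def)
  show "(\<Sum>i\<in>UNIV. column_mix j k e $ i $ l) = 1" for l
    using assms by (cases "l = j") (simp_all add: column_mix_def sum.distrib)
qed

lemma column_mix_not_perm_mat:
  assumes "0 < e" "e < 1" "j \<noteq> k"
  shows "\<not> perm_mat (column_mix j k e)"
proof
  assume "perm_mat (column_mix j k e)"
  then obtain p where "column_mix j k e = perm_matrix p"
    unfolding perm_mat_iff_perm_matrix by blast
  then have "column_mix j k e $ j $ j \<in> {0, 1}"
    by (simp add: perm_matrix_def)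
  then show False
    using assms by (simp add: column_mix_def)
qed

lemma finite_pos_obtain_less:
  fixes f :: "'a::finite \<Rightarrow> real"
  assumes "\<And>i. 0 < f i"
  obtains e where "0 < e" "\<And>i. e < f i"
proof
  have "Min (range f) \<in> range f"
    by (simp add: Min_in)
  then show "0 < Min (range f) / 2"
    using assms by auto
  show "Min (range f) / 2 < f i" for i
  proof -
    have "Min (range f) \<le> f i"
      by (rule Min_le) auto
    then show ?thesis
      using assms[of i] by linarith
  qed
qed

lemma s3_unmix_column:
  assumes A: "A \<in> s3" and jk: "j \<noteq> k" and sub: "\<forall>i. supp_mat A i k \<longrightarrow> supp_mat A i j"
    and e: "0 < e" "e < 1" and e_less: "\<And>i. supp_mat A i j \<Longrightarrow> e < A $ i $ j"
  defines "B \<equiv> \<chi> i l. if l = j then (A $ i $ j - e * A $ i $ k) / (1 - e) else A $ i $ l"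
  shows "B \<in> s3" "supp_mat B = supp_mat A" "A = B ** column_mix j k e"
proof -
  have B_other: "B $ i $ l = A $ i $ l" if "l \<noteq> j" for i l
    using that by (simp add: B_def)
  have B_supp_col: "0 < B $ i $ j" if "supp_mat A i j" for i
  proof -
    have "e * A $ i $ k \<le> e"
      using s3_le_1[OF A] s3_nonneg[OF A] e by (simp add: mult_left_le)
    then have "0 < A $ i $ j - e * A $ i $ k"
      using e_less[OF that] by linarith
    then show ?thesis
      using e by (simp add: B_def)
  qed
  have B_zero_col: "B $ i $ j = 0" if "\<not> supp_mat A i j" for i
  proof -
    have "A $ i $ j = 0" "A $ i $ k = 0"
      using that sub s3_nonneg[OF A] by (auto simp: supp_mat_def order_less_le)
    then show ?thesis
      by (simp add: B_def)
  qed
  have B_nonneg: "0 \<le> B $ i $ l" for i l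
  proof (cases "l = j")
    case True
    then show ?thesis
      using B_supp_col[of i] B_zero_col[of i] by (cases "supp_mat A i j") auto
  next
    case False
    then show ?thesis
      using s3_nonneg[OF A] by (simp add: B_other)
  qed
  have "(\<Sum>i\<in>UNIV. B $ i $ j) = (\<Sum>i\<in>UNIV. A $ i $ j - e * A $ i $ k) / (1 - e)"
    by (simp add: B_def sum_divide_distrib)
  also have "\<dots> = 1"
    using e by (simp add: sum_subtractf sum_distrib_left[symmetric] s3_column_sum[OF A])
  finally have "(\<Sum>i\<in>UNIV. B $ i $ l) = 1" for l
    using s3_column_sum[OF A, of l] by (cases "l = j") (simp_all add: B_other)
  then show "B \<in> s3"
    by (simp add: s3_def B_nonneg)
  show "supp_mat B = supp_mat A"
  proof (intro ext)
    fix i l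
    show "supp_mat B i l = supp_mat A i l"
    proof (cases "l = j")
      case True
      then show ?thesis
        using B_supp_col[of i] B_zero_col[of i] by (metis less_irrefl supp_mat_def)
    next
      case False
      then show ?thesis
        by (simp add: supp_mat_def B_other)
    qed
  qed
  show "A = B ** column_mix j k e"
    using e jk by (simp add: vec_eq_iff mult_column_mix B_def field_simps)
qed

lemma s3_factor_column_mix:
  assumes A: "A \<in> s3" and jk: "j \<noteq> k" and sub: "\<forall>i. supp_mat A i k \<longrightarrow> supp_mat A i j"
  obtains e B where "0 < e" "e < 1" "B \<in> s3" "supp_mat B = supp_mat A" "A = B ** column_mix j k e"
proof -
  define f where "f i = (if supp_mat A i j then A $ i $ j else 1)" for i
  have "0 < f i" for i
    by (simp add: f_def supp_mat_def)
  then obtain e where e: "0 < e" and e_less: "\<And>i. e < f i"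
    using finite_pos_obtain_less by blast
  have e1: "e < 1"
    using e_less[of j] s3_le_1[OF A, of j j] by (auto simp: f_def split: if_splits)
  have "e < A $ i $ j" if "supp_mat A i j" for i
    using e_less[of i] that by (simp add: f_def)
  then show ?thesis
    using that[OF e e1 s3_unmix_column[OF A jk sub e e1]] by blast
qed

lemma perm_mat_not_indivisible:
  assumes "A \<in> s3" "perm_mat A"
  shows "\<not> indivisible A"
proof -
  have "A = A ** perm_matrix id"
    by (simp add: vec_eq_iff mult_perm_matrix)
  moreover have "perm_mat (perm_matrix id)"
    unfolding perm_mat_iff_perm_matrix using permutes_id by blast
  ultimately show ?thesis
    using assms perm_mat_in_s3 unfolding indivisible_def by blast
qed

lemma indivisible_imp_columns_incomparable:
  assumes A: "A \<in> s3" and ind: "indivisible A" and jk: "j \<noteq> k"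
  shows "\<not> (\<forall>i. supp_mat A i k \<longrightarrow> supp_mat A i j)"
proof
  assume "\<forall>i. supp_mat A i k \<longrightarrow> supp_mat A i j"
  then obtain e B where e: "0 < e" "e < 1" and B: "B \<in> s3" "supp_mat B = supp_mat A"
    and factor: "A = B ** column_mix j k e"
    using s3_factor_column_mix[OF A jk] by blast
  have "\<not> perm_mat B"
    using B perm_mat_not_indivisible[OF A] ind perm_mat_iff_perm_pattern[OF A]
      perm_mat_iff_perm_pattern[OF B(1)] by auto
  moreover have "\<not> perm_mat (column_mix j k e)"
    using column_mix_not_perm_mat e jk by blast
  ultimately show False
    using ind factor B(1) column_mix_in_s3[of e j k] e jk unfolding indivisible_def by auto
qed

lemma indivisible_iff_zero_pattern_perm:
  assumes A: "A \<in> s3"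
  shows "indivisible A \<longleftrightarrow> perm_pattern (\<lambda>i j. \<not> supp_mat A i j)"
proof
  assume ind: "indivisible A"
  show "perm_pattern (\<lambda>i j. \<not> supp_mat A i j)"
  proof (rule perm_pattern_compl_if_incomparable_columns)
    show "\<forall>j. \<exists>i. supp_mat A i j"
      using s3_column_ex_supp[OF A] by blast
    show "\<not> perm_pattern (supp_mat A)"
      using perm_mat_not_indivisible[OF A] ind perm_mat_iff_perm_pattern[OF A] by blast
    show "\<forall>j k. j \<noteq> k \<longrightarrow> \<not> (\<forall>i. supp_mat A i k \<longrightarrow> supp_mat A i j)"
      using indivisible_imp_columns_incomparable[OF A ind] by blast
  qed
next
  assume zero: "perm_pattern (\<lambda>i j. \<not> supp_mat A i j)"
  show "indivisible A"
    unfolding indivisible_def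
  proof (intro ballI impI)
    fix B C assume B: "B \<in> s3" and C: "C \<in> s3" and factor: "A = B ** C"
    have "perm_pattern (supp_mat B) \<longleftrightarrow> \<not> perm_pattern (supp_mat C)"
    proof (rule perm_pattern_comp_compl_xor)
      show "\<forall>k. \<exists>i. supp_mat B i k" "\<forall>j. \<exists>k. supp_mat C k j"
        using s3_column_ex_supp B C by blast+
      show "perm_pattern (\<lambda>i j. \<not> (\<exists>k. supp_mat B i k \<and> supp_mat C k j))"
        using zero unfolding factor supp_mat_mult[OF s3_nonneg[OF B] s3_nonneg[OF C]] .
    qed
    then show "perm_mat B \<and> \<not> perm_mat C \<or> \<not> perm_mat B \<and> perm_mat C"
      using perm_mat_iff_perm_pattern[OF B] perm_mat_iff_perm_pattern[OF C] by blast
  qed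
qed

theorem theorem1:
  fixes A :: "real^3^3"
  assumes "A \<in> s3"
  shows "indivisible A \<longleftrightarrow>
    (\<exists>P Q. perm_mat P \<and> perm_mat Q \<and> P ** sgn_mat A ** Q = J0)"
  using indivisible_iff_zero_pattern_perm[OF assms] sgn_mat_perm_equiv_J0_iff[OF s3_nonneg[OF assms]]
  by simp

end
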